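(* Let $R_{approach}=\sup\{R\in\mathbb R: R\le G(R)\}$. Then $R_{static}\le R_{approach}$, where $$R_{static}=\sup_{w\in\Delta_K}\ \min_{i\ne j}\ \sup_{s\in[0,1]}\ -\sum_{a\in[K]}w_a\log\Big(\sum_{x\in\mathcal X}\nu^i_a(x)^s\nu^j_a(x)^{1-s}\Big).$$
   Context: $\mathcal X$ finite; $\Delta_K,\Delta_m$ the probability simplices on $[K],[m]$; $m\ge2$ bandits $\nu^1,\dots,\nu^m$, $\nu^i=(\nu^i_a)_{a\in[K]}$, each $\nu^i_a$ a full-support distribution on $\mathcal X$. For $\beta\in\Delta_m$ let $\phi_a(\beta)=-\log\sum_x\prod_i\nu^i_a(x)^{\beta_i}$, $I(\beta)=\min_a\phi_a(\beta)$, $L(\beta)=\max_a\phi_a(\beta)$. For $i<j$, $b\in[0,1]$, $\beta_{ij}(b)=b\,e_i+(1-b)e_j$. For $R\in\mathbb R$, $M(R)=\{(i,j):i<j,\ \sup_{b}I(\beta_{ij}(b))<R\}$. Define $$G(R)=\begin{cases}+\infty,&R<\min_{i<j}\sup_{b\in[0,1]}I(\beta_{ij}(b)),\\ \sup_{(\tilde\beta_{ij})}\ \inf_{\lambda\in\Delta_{M(R)}}L\Big(\sum_{(i,j)\in M(R)}\lambda_{ij}\tilde\beta_{ij}\Big),&\text{otherwise},\end{cases}$$ where the supremum is over all choices of points $\tilde\beta_{ij}\in\{\beta_{ij}(b):b\in[0,1]\}$ for $(i,j)\in M(R)$, and an infimum over an empty index set is $+\infty$. *)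

theory Defs
  imports "HOL-Analysis.Analysis"
begin

text \<open>Conventions: arms are indexed by {..<K}, bandits by {..<m}; the alphabet is a
finite type 'x.  nu i a x is the probability of x under arm a of bandit i.\<close>

definition prob_simplex :: "nat \<Rightarrow> (nat \<Rightarrow> real) set" where
  "prob_simplex n = {w. (\<forall>i<n. 0 \<le> w i) \<and> (\<forall>i\<ge>n. w i = 0) \<and> (\<Sum>i<n. w i) = 1}"

definition phi :: "(nat \<Rightarrow> nat \<Rightarrow> 'x::finite \<Rightarrow> real) \<Rightarrow> nat \<Rightarrow> nat \<Rightarrow> (nat \<Rightarrow> real) \<Rightarrow> real" where
  "phi nu m a \<beta> = - ln (\<Sum>x\<in>UNIV. \<Prod>i<m. nu i a x powr \<beta> i)"

definition Ifun :: "(nat \<Rightarrow> nat \<Rightarrow> 'x::finite \<Rightarrow> real) \<Rightarrow> nat \<Rightarrow> nat \<Rightarrow> (nat \<Rightarrow> real) \<Rightarrow> real" where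
  "Ifun nu K m \<beta> = Min ((\<lambda>a. phi nu m a \<beta>) ` {..<K})"

definition Lfun :: "(nat \<Rightarrow> nat \<Rightarrow> 'x::finite \<Rightarrow> real) \<Rightarrow> nat \<Rightarrow> nat \<Rightarrow> (nat \<Rightarrow> real) \<Rightarrow> real" where
  "Lfun nu K m \<beta> = Max ((\<lambda>a. phi nu m a \<beta>) ` {..<K})"

definition beta_pair :: "nat \<Rightarrow> nat \<Rightarrow> real \<Rightarrow> nat \<Rightarrow> real" where
  "beta_pair i j b = (\<lambda>k. if k = i then b else if k = j then 1 - b else 0)"

definition Spair :: "(nat \<Rightarrow> nat \<Rightarrow> 'x::finite \<Rightarrow> real) \<Rightarrow> nat \<Rightarrow> nat \<Rightarrow> nat \<Rightarrow> nat \<Rightarrow> ereal" where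
  "Spair nu K m i j = (SUP b\<in>{0..1}. ereal (Ifun nu K m (beta_pair i j b)))"

definition Mset :: "(nat \<Rightarrow> nat \<Rightarrow> 'x::finite \<Rightarrow> real) \<Rightarrow> nat \<Rightarrow> nat \<Rightarrow> real \<Rightarrow> (nat \<times> nat) set" where
  "Mset nu K m R = {(i, j). i < j \<and> j < m \<and> Spair nu K m i j < ereal R}"

definition Gfun :: "(nat \<Rightarrow> nat \<Rightarrow> 'x::finite \<Rightarrow> real) \<Rightarrow> nat \<Rightarrow> nat \<Rightarrow> real \<Rightarrow> ereal" where
  "Gfun nu K m R =
    (if ereal R < Min {Spair nu K m i j | i j. i < j \<and> j < m} then \<infinity>
     else (let M = Mset nu K m R in
       SUP b\<in>{b :: nat \<times> nat \<Rightarrow> real. \<forall>p\<in>M. b p \<in> {0..1}}.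
         INF lam\<in>{lam :: nat \<times> nat \<Rightarrow> real. (\<forall>p\<in>M. 0 \<le> lam p) \<and> (\<Sum>p\<in>M. lam p) = 1}.
           ereal (Lfun nu K m (\<lambda>k. \<Sum>p\<in>M. lam p * beta_pair (fst p) (snd p) (b p) k))))"

definition R_approach :: "(nat \<Rightarrow> nat \<Rightarrow> 'x::finite \<Rightarrow> real) \<Rightarrow> nat \<Rightarrow> nat \<Rightarrow> ereal" where
  "R_approach nu K m = Sup {ereal R | R. ereal R \<le> Gfun nu K m R}"

definition R_static :: "(nat \<Rightarrow> nat \<Rightarrow> 'x::finite \<Rightarrow> real) \<Rightarrow> nat \<Rightarrow> nat \<Rightarrow> ereal" where
  "R_static nu K m =
    (SUP w\<in>prob_simplex K. Min {(SUP s\<in>{0..1}. ereal (- (\<Sum>a<K. w a *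
          ln (\<Sum>x\<in>UNIV. nu i a x powr s * nu j a x powr (1 - s))))) | i j. i < m \<and> j < m \<and> i \<noteq> j})"

end

theory Submission
  imports Defs
begin

text \<open>For a weight vector w on the arms, \<Phi>_w(\<beta>) = \<Sum>_a w_a \<phi>_a(\<beta>) is concave in \<beta>
  (each \<phi>_a is minus a log-sum-exp of a function linear in \<beta>) and bounded above by L.
  If R < R_static, some w admits on every segment \<beta>_ij a point \<beta>_ij(b_ij) with
  \<Phi>_w > R. For any mixture \<beta> of these points, L(\<beta>) \<ge> \<Phi>_w(\<beta>) \<ge> \<Sum> \<lambda>_ij \<Phi>_w(\<beta>_ij(b_ij)) \<ge> R,
  so the choice b witnesses G(R) \<ge> R and hence R \<le> R_approach.\<close>

lemma ln_sum_exp_convex: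
  fixes c :: "'p \<Rightarrow> 'x::finite \<Rightarrow> real"
  assumes P: "finite P" "P \<noteq> {}" and l: "\<And>p. p \<in> P \<Longrightarrow> 0 \<le> l p" "sum l P = 1"
  shows "ln (\<Sum>x\<in>UNIV. exp (\<Sum>p\<in>P. l p * c p x)) \<le> (\<Sum>p\<in>P. l p * ln (\<Sum>x\<in>UNIV. exp (c p x)))"
proof -
  define S where "S p = (\<Sum>x\<in>UNIV. exp (c p x))" for p
  have S_pos: "0 < S p" for p
    unfolding S_def by (intro sum_pos) auto
  then have S_nonzero: "S p \<noteq> 0" for p
    by (metis less_irrefl)
  define T where "T = (\<Sum>p\<in>P. l p * ln (S p))"
  have pointwise: "exp (\<Sum>p\<in>P. l p * c p x) \<le> exp T * (\<Sum>p\<in>P. l p * (exp (c p x) / S p))" for x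
  proof -
    have "exp (\<Sum>p\<in>P. l p * c p x) = exp T * exp (\<Sum>p\<in>P. l p * (c p x - ln (S p)))"
      by (simp add: T_def right_diff_distrib sum_subtractf flip: exp_add)
    also have "\<dots> \<le> exp T * (\<Sum>p\<in>P. l p * exp (c p x - ln (S p)))"
      using convex_on_sum[OF P exp_convex l(2) l(1)] by simp
    also have "\<dots> = exp T * (\<Sum>p\<in>P. l p * (exp (c p x) / S p))"
      using S_pos by (simp add: exp_diff)
    finally show ?thesis .
  qed
  have "(\<Sum>x\<in>UNIV. exp (\<Sum>p\<in>P. l p * c p x)) \<le> (\<Sum>x\<in>UNIV. exp T * (\<Sum>p\<in>P. l p * (exp (c p x) / S p)))"
    by (intro sum_mono pointwise)
  also have "\<dots> = exp T * (\<Sum>x\<in>UNIV. \<Sum>p\<in>P. l p * (exp (c p x) / S p))"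
    by (rule sum_distrib_left[symmetric])
  also have "(\<Sum>x\<in>UNIV. \<Sum>p\<in>P. l p * (exp (c p x) / S p)) = (\<Sum>p\<in>P. l p * (S p / S p))"
    unfolding S_def by (subst sum.swap) (simp only: sum_distrib_left sum_divide_distrib)
  also have "\<dots> = 1"
    using l(2) by (simp add: S_nonzero)
  finally have "(\<Sum>x\<in>UNIV. exp (\<Sum>p\<in>P. l p * c p x)) \<le> exp T"
    by simp
  then have "ln (\<Sum>x\<in>UNIV. exp (\<Sum>p\<in>P. l p * c p x)) \<le> ln (exp T)"
    by (intro ln_mono sum_pos) auto
  then show ?thesis
    by (simp add: T_def S_def)
qed

lemma prod_powr_eq_exp_sum:
  fixes f b :: "'i \<Rightarrow> real"
  assumes "finite A" and "\<And>i. i \<in> A \<Longrightarrow> 0 < f i"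
  shows "(\<Prod>i\<in>A. f i powr b i) = exp (\<Sum>i\<in>A. b i * ln (f i))"
proof -
  have "(\<Prod>i\<in>A. f i powr b i) = (\<Prod>i\<in>A. exp (b i * ln (f i)))"
    using assms(2) by (intro prod.cong refl) (fastforce simp: powr_def mult.commute)
  then show ?thesis
    by (simp add: exp_sum[OF assms(1)])
qed

lemma phi_eq_neg_ln_sum_exp:
  assumes "\<And>i x. i < m \<Longrightarrow> 0 < nu i a x"
  shows "phi nu m a \<beta> = - ln (\<Sum>x\<in>UNIV. exp (\<Sum>i<m. \<beta> i * ln (nu i a x)))"
proof -
  have "(\<Prod>i<m. nu i a x powr \<beta> i) = exp (\<Sum>i<m. \<beta> i * ln (nu i a x))" for x
    using assms by (intro prod_powr_eq_exp_sum) auto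
  then show ?thesis
    by (simp add: phi_def)
qed

lemma phi_concave_sum:
  fixes nu :: "nat \<Rightarrow> nat \<Rightarrow> 'x::finite \<Rightarrow> real" and bs :: "'p \<Rightarrow> nat \<Rightarrow> real"
  assumes pos: "\<And>i x. i < m \<Longrightarrow> 0 < nu i a x"
    and P: "finite P" "P \<noteq> {}" and l: "\<And>p. p \<in> P \<Longrightarrow> 0 \<le> l p" "sum l P = 1"
  shows "(\<Sum>p\<in>P. l p * phi nu m a (bs p)) \<le> phi nu m a (\<lambda>k. \<Sum>p\<in>P. l p * bs p k)"
proof -
  define c where "c p x = (\<Sum>i<m. bs p i * ln (nu i a x))" for p x
  have linear: "(\<Sum>i<m. (\<Sum>p\<in>P. l p * bs p i) * ln (nu i a x)) = (\<Sum>p\<in>P. l p * c p x)" for x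
    unfolding c_def by (simp add: sum_distrib_right sum_distrib_left mult.assoc sum.swap[of _ P])
  have "ln (\<Sum>x\<in>UNIV. exp (\<Sum>p\<in>P. l p * c p x)) \<le> (\<Sum>p\<in>P. l p * ln (\<Sum>x\<in>UNIV. exp (c p x)))"
    by (rule ln_sum_exp_convex[OF P l])
  then show ?thesis
    by (simp add: phi_eq_neg_ln_sum_exp[of m nu a, OF pos] linear c_def sum_negf)
qed

lemma sum_beta_pair:
  fixes L :: "nat \<Rightarrow> real"
  assumes "i \<noteq> j" "i < m" "j < m"
  shows "(\<Sum>k<m. beta_pair i j s k * L k) = s * L i + (1 - s) * L j"
proof -
  have "(\<Sum>k<m. beta_pair i j s k * L k)
      = (\<Sum>k<m. (if k = i then s * L i else 0) + (if k = j then (1 - s) * L j else 0))"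
    using assms(1) by (intro sum.cong) (auto simp: beta_pair_def)
  then show ?thesis
    using assms by (simp add: sum.distrib)
qed

lemma prod_powr_beta_pair:
  fixes f :: "nat \<Rightarrow> real"
  assumes "i \<noteq> j" "i < m" "j < m" and "\<And>k. k < m \<Longrightarrow> 0 < f k"
  shows "(\<Prod>k<m. f k powr beta_pair i j s k) = f i powr s * f j powr (1 - s)"
proof -
  have "(\<Prod>k<m. f k powr beta_pair i j s k) = exp (\<Sum>k<m. beta_pair i j s k * ln (f k))"
    using assms(4) by (intro prod_powr_eq_exp_sum) auto
  also have "\<dots> = exp (s * ln (f i) + (1 - s) * ln (f j))"
    using assms(1-3) by (simp add: sum_beta_pair)
  also have "\<dots> = f i powr s * f j powr (1 - s)"
    using assms(4)[OF assms(2)] assms(4)[OF assms(3)] by (simp add: powr_def exp_add mult.commute)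
  finally show ?thesis .
qed

definition phi_avg ::
    "(nat \<Rightarrow> nat \<Rightarrow> 'x::finite \<Rightarrow> real) \<Rightarrow> nat \<Rightarrow> nat \<Rightarrow> (nat \<Rightarrow> real) \<Rightarrow> (nat \<Rightarrow> real) \<Rightarrow> real"
  where "phi_avg nu K m w \<beta> = (\<Sum>a<K. w a * phi nu m a \<beta>)"

lemma phi_avg_le_Lfun:
  assumes "w \<in> prob_simplex K"
  shows "phi_avg nu K m w \<beta> \<le> Lfun nu K m \<beta>"
proof -
  have "phi_avg nu K m w \<beta> \<le> (\<Sum>a<K. w a * Lfun nu K m \<beta>)"
    unfolding phi_avg_def Lfun_def
    using assms by (intro sum_mono mult_left_mono Max_ge) (auto simp: prob_simplex_def)
  also have "\<dots> = Lfun nu K m \<beta>"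
    using assms by (simp add: prob_simplex_def flip: sum_distrib_right)
  finally show ?thesis .
qed

lemma phi_avg_concave_sum:
  fixes nu :: "nat \<Rightarrow> nat \<Rightarrow> 'x::finite \<Rightarrow> real" and bs :: "'p \<Rightarrow> nat \<Rightarrow> real"
  assumes pos: "\<And>i a x. i < m \<Longrightarrow> a < K \<Longrightarrow> 0 < nu i a x" and w: "w \<in> prob_simplex K"
    and P: "finite P" "P \<noteq> {}" and l: "\<And>p. p \<in> P \<Longrightarrow> 0 \<le> l p" "sum l P = 1"
  shows "(\<Sum>p\<in>P. l p * phi_avg nu K m w (bs p)) \<le> phi_avg nu K m w (\<lambda>k. \<Sum>p\<in>P. l p * bs p k)"
proof -
  have "(\<Sum>p\<in>P. l p * phi_avg nu K m w (bs p)) = (\<Sum>a<K. w a * (\<Sum>p\<in>P. l p * phi nu m a (bs p)))"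
    unfolding phi_avg_def by (simp add: sum_distrib_left sum.swap[of _ P] mult.left_commute)
  also have "\<dots> \<le> phi_avg nu K m w (\<lambda>k. \<Sum>p\<in>P. l p * bs p k)"
    unfolding phi_avg_def using w pos
    by (intro sum_mono mult_left_mono phi_concave_sum[OF _ P l]) (auto simp: prob_simplex_def)
  finally show ?thesis .
qed

lemma phi_avg_beta_pair:
  assumes pos: "\<And>i a x. i < m \<Longrightarrow> a < K \<Longrightarrow> 0 < nu i a x" and ij: "i \<noteq> j" "i < m" "j < m"
  shows "- (\<Sum>a<K. w a * ln (\<Sum>x\<in>UNIV. nu i a x powr s * nu j a x powr (1 - s)))
      = phi_avg nu K m w (beta_pair i j s)"
  unfolding phi_avg_def phi_def using pos ij by (simp add: prod_powr_beta_pair sum_negf)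

lemma le_Gfun_of_weights:
  assumes pos: "\<And>i a x. i < m \<Longrightarrow> a < K \<Longrightarrow> 0 < nu i a x" and w: "w \<in> prob_simplex K"
    and segments: "\<And>i j. i < j \<Longrightarrow> j < m \<Longrightarrow> \<exists>s\<in>{0..1}. R < phi_avg nu K m w (beta_pair i j s)"
  shows "ereal R \<le> Gfun nu K m R"
proof (cases "ereal R < Min {Spair nu K m i j | i j. i < j \<and> j < m}")
  case False
  define M where "M = Mset nu K m R"
  define Lambda where "Lambda = {lam :: nat \<times> nat \<Rightarrow> real. (\<forall>p\<in>M. 0 \<le> lam p) \<and> (\<Sum>p\<in>M. lam p) = 1}"
  have "finite M"
    by (rule finite_subset[of _ "{..<m} \<times> {..<m}"]) (auto simp: M_def Mset_def)
  have "\<forall>p\<in>M. \<exists>s\<in>{0..1}. R < phi_avg nu K m w (beta_pair (fst p) (snd p) s)"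
  proof
    fix p assume "p \<in> M"
    then have "fst p < snd p" "snd p < m"
      by (auto simp: M_def Mset_def)
    then show "\<exists>s\<in>{0..1}. R < phi_avg nu K m w (beta_pair (fst p) (snd p) s)"
      by (rule segments)
  qed
  then obtain b where b: "\<And>p. p \<in> M \<Longrightarrow> b p \<in> {0..1}"
      "\<And>p. p \<in> M \<Longrightarrow> R < phi_avg nu K m w (beta_pair (fst p) (snd p) (b p))"
    by metis
  have "ereal R \<le> ereal (Lfun nu K m (\<lambda>k. \<Sum>p\<in>M. lam p * beta_pair (fst p) (snd p) (b p) k))"
    if "lam \<in> Lambda" for lam
  proof -
    from that have l: "\<And>p. p \<in> M \<Longrightarrow> 0 \<le> lam p" "sum lam M = 1"
      by (auto simp: Lambda_def)
    then have "M \<noteq> {}" by auto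
    have "R = (\<Sum>p\<in>M. lam p * R)"
      using l(2) by (simp flip: sum_distrib_right)
    also have "\<dots> \<le> (\<Sum>p\<in>M. lam p * phi_avg nu K m w (beta_pair (fst p) (snd p) (b p)))"
      using l(1) b(2) by (intro sum_mono mult_left_mono) (auto intro: less_imp_le)
    also have "\<dots> \<le> phi_avg nu K m w (\<lambda>k. \<Sum>p\<in>M. lam p * beta_pair (fst p) (snd p) (b p) k)"
      by (rule phi_avg_concave_sum[OF pos w \<open>finite M\<close> \<open>M \<noteq> {}\<close> l])
    also have "\<dots> \<le> Lfun nu K m (\<lambda>k. \<Sum>p\<in>M. lam p * beta_pair (fst p) (snd p) (b p) k)"
      by (rule phi_avg_le_Lfun[OF w])
    finally show ?thesis by simp
  qed
  then have R_le_INF: "ereal R \<le> (INF lam\<in>Lambda.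
      ereal (Lfun nu K m (\<lambda>k. \<Sum>p\<in>M. lam p * beta_pair (fst p) (snd p) (b p) k)))"
    by (rule INF_greatest)
  have Gfun_eq: "Gfun nu K m R = (SUP c\<in>{c. \<forall>p\<in>M. c p \<in> {0..1}}. INF lam\<in>Lambda.
      ereal (Lfun nu K m (\<lambda>k. \<Sum>p\<in>M. lam p * beta_pair (fst p) (snd p) (c p) k)))"
    using False by (simp add: Gfun_def Let_def M_def Lambda_def)
  show ?thesis
    unfolding Gfun_eq using b(1) R_le_INF by (intro SUP_upper2[of b]) auto
qed (simp add: Gfun_def)

lemma weights_of_less_R_static:
  assumes pos: "\<And>i a x. i < m \<Longrightarrow> a < K \<Longrightarrow> 0 < nu i a x" and R: "ereal R < R_static nu K m"
  obtains w where "w \<in> prob_simplex K"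
    and "\<And>i j. i < j \<Longrightarrow> j < m \<Longrightarrow> \<exists>s\<in>{0..1}. R < phi_avg nu K m w (beta_pair i j s)"
proof -
  define D where "D w i j = (SUP s\<in>{0..1}. ereal (- (\<Sum>a<K. w a *
      ln (\<Sum>x\<in>UNIV. nu i a x powr s * nu j a x powr (1 - s)))))" for w i j
  obtain w where w: "w \<in> prob_simplex K"
    and Rw: "ereal R < Min {D w i j | i j. i < m \<and> j < m \<and> i \<noteq> j}"
    using R unfolding R_static_def D_def[symmetric] by (auto simp: less_SUP_iff)
  have fin: "finite {D w i j | i j. i < m \<and> j < m \<and> i \<noteq> j}"
    by (rule finite_subset[of _ "(\<lambda>(i, j). D w i j) ` ({..<m} \<times> {..<m})"]) auto
  have "\<exists>s\<in>{0..1}. R < phi_avg nu K m w (beta_pair i j s)" if ij: "i < j" "j < m" for i j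
  proof -
    have "D w i j \<in> {D w i j | i j. i < m \<and> j < m \<and> i \<noteq> j}"
      using ij by fastforce
    then have "ereal R < D w i j"
      using Rw Min_le[OF fin] by (blast intro: less_le_trans)
    moreover have "- (\<Sum>a<K. w a * ln (\<Sum>x\<in>UNIV. nu i a x powr s * nu j a x powr (1 - s)))
        = phi_avg nu K m w (beta_pair i j s)" for s
      using ij by (intro phi_avg_beta_pair[OF pos]) auto
    ultimately show ?thesis
      by (auto simp: D_def less_SUP_iff)
  qed
  with w show ?thesis
    by (rule that)
qed

theorem mainTheorem17:
  fixes nu :: "nat \<Rightarrow> nat \<Rightarrow> 'x::finite \<Rightarrow> real" and K m :: nat
  assumes "K \<ge> 1" and "m \<ge> 2"
    and "\<And>i a x. i < m \<Longrightarrow> a < K \<Longrightarrow> 0 < nu i a x"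
    and "\<And>i a. i < m \<Longrightarrow> a < K \<Longrightarrow> (\<Sum>x\<in>UNIV. nu i a x) = 1"
  shows "R_static nu K m \<le> R_approach nu K m"
proof (rule ccontr)
  assume "\<not> ?thesis"
  then have "R_approach nu K m < R_static nu K m"
    by (simp add: not_le)
  then obtain R where R_approach: "R_approach nu K m < ereal R"
    and R_static: "ereal R < R_static nu K m"
    using ereal_dense2 by blast
  obtain w where w: "w \<in> prob_simplex K"
    and segments: "\<And>i j. i < j \<Longrightarrow> j < m \<Longrightarrow>
      \<exists>s\<in>{0..1}. R < phi_avg nu K m w (beta_pair i j s)"
    using weights_of_less_R_static[OF assms(3) R_static] by blast
  have "ereal R \<le> Gfun nu K m R"
    by (rule le_Gfun_of_weights[OF assms(3) w segments])
  then have "ereal R \<le> R_approach nu K m"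
    unfolding R_approach_def by (intro Sup_upper) blast
  with R_approach show False by simp
qed

end
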